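(* Let $\mathcal{H}$ be a CNET for a set $\mathcal{T}$ of rooted binary phylogenetic $X$-trees with hybridization number $k$ and deletion AAF $F$. Then for every $T\in\mathcal{T}$, $|I(T)|\le k-1$. Consequently, if $|\mathcal{T}|=3$ then $|I|\le 3(k-1)$, where $I=\bigcup_{T\in\mathcal{T}}I(T)$.
   Context: Trees: a rooted binary phylogenetic $X$-tree has leaves bijectively labelled by $X$, a root of indegree $0$ and outdegree $1$ (regarded as a leaf labelled $\rho$), and all other non-leaf nodes of indegree $1$ and outdegree $2$. A CNET for $\mathcal{T}$ is a pair $(H,\mathcal{E})$ where $H$ is a DAG (sources are roots, each with one child; sinks are leaves, bijectively labelled by $X$), $\mathcal{E}=\{H(T):T\in\mathcal{T}\}$ with each $H(T)\subseteq H$ an image of $T$ (i.e. $T$ is obtained from $H(T)$ by suppressing degree-2 nodes) containing an edge incident to a root, every edge of $H$ lies in some $H(T)$, every non-leaf non-root node has exactly two children, and for every such node some $H(T)$ contains both its child edges. Its hybridization number is $\sum_v(d^-(v)-1)$ over nodes with indegree $d^-(v)\ge2$. Its induced hybridization network is obtained by splitting nodes that are both reticulations and split nodes into a reticulation above a split node, refining multi-parent reticulations into chains of binary reticulations, joining multiple roots into a single root via new edges, and inserting a reticulation above each leaf with several parents; the deletion AAF of the CNET is the partition of the leaf labels (including $\rho$) induced by the connected components containing labelled leaves after deleting all edges entering reticulations of the induced network. For $T\in\mathcal{T}$, $I(T)$ is the set of nodes of $T$ that lie on no path of $T$ (ignoring edge directions) between two leaves $x,y$ belonging to the same component of $F$,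 the root $\rho$ being counted as a leaf. *)

theory Defs
  imports Main
begin

definition indeg :: "('v \<times> 'v) set \<Rightarrow> 'v \<Rightarrow> nat" where
  "indeg E v = card {u. (u, v) \<in> E}"

definition outdeg :: "('v \<times> 'v) set \<Rightarrow> 'v \<Rightarrow> nat" where
  "outdeg E v = card {w. (v, w) \<in> E}"

definition dpath :: "('v \<times> 'v) set \<Rightarrow> 'v list \<Rightarrow> 'v \<Rightarrow> 'v \<Rightarrow> bool" where
  "dpath E p u v \<longleftrightarrow> length p \<ge> 2 \<and> hd p = u \<and> last p = v \<and> distinct p \<and>
     (\<forall>i. Suc i < length p \<longrightarrow> (p ! i, p ! Suc i) \<in> E)"

definition path_edges :: "'v list \<Rightarrow> ('v \<times> 'v) set" where
  "path_edges p = {(p ! i, p ! Suc i) | i. Suc i < length p}"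

definition interior :: "'v list \<Rightarrow> 'v set" where
  "interior p = set (butlast (tl p))"

definition upath :: "('v \<times> 'v) set \<Rightarrow> 'v list \<Rightarrow> 'v \<Rightarrow> 'v \<Rightarrow> bool" where
  "upath E p u v \<longleftrightarrow> p \<noteq> [] \<and> hd p = u \<and> last p = v \<and> distinct p \<and>
     (\<forall>i. Suc i < length p \<longrightarrow> (p ! i, p ! Suc i) \<in> E \<or> (p ! Suc i, p ! i) \<in> E)"

type_synonym ('n, 'x) xtree = "'n set \<times> ('n \<times> 'n) set \<times> ('n \<Rightarrow> 'x)"

definition rbp_tree :: "'x set \<Rightarrow> ('n, 'x) xtree \<Rightarrow> bool" where
  "rbp_tree X T \<longleftrightarrow> (case T of (VT, ET, lT) \<Rightarrow>
     finite VT \<and> ET \<subseteq> VT \<times> VT \<and> acyclic ET \<and>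
     (\<exists>!r. r \<in> VT \<and> indeg ET r = 0) \<and>
     (\<forall>r\<in>VT. indeg ET r = 0 \<longrightarrow> outdeg ET r = 1 \<and> (\<forall>v\<in>VT. (r, v) \<in> ET\<^sup>*)) \<and>
     (\<forall>v\<in>VT. indeg ET v \<noteq> 0 \<longrightarrow> indeg ET v = 1 \<and> (outdeg ET v = 0 \<or> outdeg ET v = 2)) \<and>
     bij_betw lT {v \<in> VT. outdeg ET v = 0} X)"

text \<open>S = (VS, ES) is an image of T in the DAG with edges E and leaf labelling lab:
  S is a subdivision of T, i.e. T is obtained from S by suppressing its nodes of
  indegree 1 and outdegree 1, leaf labels being preserved.\<close>
definition is_image ::
  "('v \<Rightarrow> 'x) \<Rightarrow> ('v \<times> 'v) set \<Rightarrow> ('n, 'x) xtree \<Rightarrow> 'v set \<times> ('v \<times> 'v) set \<Rightarrow> bool" where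
  "is_image lab E T S \<longleftrightarrow> (case T of (VT, ET, lT) \<Rightarrow> case S of (VS, ES) \<Rightarrow>
     (\<exists>(\<phi> :: 'n \<Rightarrow> 'v) (P :: 'n \<times> 'n \<Rightarrow> 'v list).
        inj_on \<phi> VT \<and>
        (\<forall>v\<in>VT. outdeg ET v = 0 \<longrightarrow> outdeg E (\<phi> v) = 0 \<and> lab (\<phi> v) = lT v) \<and>
        (\<forall>e\<in>ET. dpath ES (P e) (\<phi> (fst e)) (\<phi> (snd e))) \<and>
        (\<forall>e\<in>ET. \<forall>e'\<in>ET. e \<noteq> e' \<longrightarrow> interior (P e) \<inter> set (P e') = {}) \<and>
        (\<forall>e\<in>ET. interior (P e) \<inter> \<phi> ` VT = {}) \<and>
        ES = (\<Union>e\<in>ET. path_edges (P e)) \<and>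
        VS = \<phi> ` VT \<union> (\<Union>e\<in>ET. set (P e))))"

text \<open>(H, \<E>) with H = (V, E, lab) and \<E> = {emb T | T \<in> TT}.\<close>
definition cnet ::
  "'x set \<Rightarrow> ('n, 'x) xtree set \<Rightarrow> 'v set \<Rightarrow> ('v \<times> 'v) set \<Rightarrow> ('v \<Rightarrow> 'x)
     \<Rightarrow> (('n, 'x) xtree \<Rightarrow> 'v set \<times> ('v \<times> 'v) set) \<Rightarrow> bool" where
  "cnet X TT V E lab emb \<longleftrightarrow>
     finite V \<and> E \<subseteq> V \<times> V \<and> acyclic E \<and>
     (\<forall>v\<in>V. indeg E v = 0 \<longrightarrow> outdeg E v = 1) \<and>
     bij_betw lab {v \<in> V. outdeg E v = 0} X \<and>
     (\<forall>v\<in>V. indeg E v \<noteq> 0 \<and> outdeg E v \<noteq> 0 \<longrightarrow> outdeg E v = 2) \<and>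
     (\<forall>T\<in>TT. fst (emb T) \<subseteq> V \<and> snd (emb T) \<subseteq> E \<and> is_image lab E T (emb T) \<and>
        (\<exists>u w. (u, w) \<in> snd (emb T) \<and> indeg E u = 0)) \<and>
     (\<forall>e\<in>E. \<exists>T\<in>TT. e \<in> snd (emb T)) \<and>
     (\<forall>v\<in>V. indeg E v \<noteq> 0 \<and> outdeg E v \<noteq> 0 \<longrightarrow>
        (\<exists>T\<in>TT. {e \<in> E. fst e = v} \<subseteq> snd (emb T)))"

definition hyb_number :: "'v set \<Rightarrow> ('v \<times> 'v) set \<Rightarrow> nat" where
  "hyb_number V E = (\<Sum>v\<in>{v \<in> V. indeg E v \<ge> 2}. indeg E v - 1)"

text \<open>The graph obtained from the induced hybridization network by deleting all edges
  entering reticulations, up to nodes irrelevant for connectivity between labelled leaves: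
  edges of H entering a node of indegree \<ge> 2 are deleted; the node None plays the role of
  the single root \<rho> of the induced network, which is joined (via tree edges) to all roots of H.\<close>
definition aaf_graph :: "'v set \<Rightarrow> ('v \<times> 'v) set \<Rightarrow> ('v option \<times> 'v option) set" where
  "aaf_graph V E =
     {(Some u, Some w) | u w. (u, w) \<in> E \<and> indeg E w < 2} \<union>
     {(None, Some r) | r. r \<in> V \<and> indeg E r = 0}"

definition aaf_conn :: "'v set \<Rightarrow> ('v \<times> 'v) set \<Rightarrow> 'v option \<Rightarrow> 'v option \<Rightarrow> bool" where
  "aaf_conn V E a b \<longleftrightarrow> (a, b) \<in> (aaf_graph V E \<union> (aaf_graph V E)\<inverse>)\<^sup>*"

definition label_node :: "'x \<Rightarrow> 'v set \<Rightarrow> ('v \<times> 'v) set \<Rightarrow> ('v \<Rightarrow> 'x) \<Rightarrow> 'x \<Rightarrow> 'v option" where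
  "label_node rho V E lab x =
     (if x = rho then None else Some (THE v. v \<in> V \<and> outdeg E v = 0 \<and> lab v = x))"

definition deletion_aaf ::
  "'x set \<Rightarrow> 'x \<Rightarrow> 'v set \<Rightarrow> ('v \<times> 'v) set \<Rightarrow> ('v \<Rightarrow> 'x) \<Rightarrow> 'x set set" where
  "deletion_aaf X rho V E lab =
     {{y \<in> insert rho X. aaf_conn V E (label_node rho V E lab x) (label_node rho V E lab y)}
       | x. x \<in> insert rho X}"

text \<open>Node v of T carries label x (the root counting as a leaf labelled \<rho>).\<close>
definition tlabelled :: "'x \<Rightarrow> ('n, 'x) xtree \<Rightarrow> 'n \<Rightarrow> 'x \<Rightarrow> bool" where
  "tlabelled rho T v x \<longleftrightarrow> (case T of (VT, ET, lT) \<Rightarrow>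
     v \<in> VT \<and> ((indeg ET v = 0 \<and> x = rho) \<or> (outdeg ET v = 0 \<and> lT v = x)))"

definition I_set :: "'x \<Rightarrow> 'x set set \<Rightarrow> ('n, 'x) xtree \<Rightarrow> 'n set" where
  "I_set rho F T = (case T of (VT, ET, lT) \<Rightarrow>
     {w \<in> VT. \<not> (\<exists>u v x y p. tlabelled rho T u x \<and> tlabelled rho T v y \<and>
                    (\<exists>B\<in>F. x \<in> B \<and> y \<in> B) \<and> upath ET p u v \<and> w \<in> set p)})"

end

theory Submission
  imports Defs
begin

(* Every component of the deletion AAF F contains the root or a reticulation of the network,
   because climbing undeleted edges from any node ends at one of them; hence |F| <= k + 1.
   Colour the labels of a tree T by their components and order the colours. For w in I(T) the
   colours of the leaves below w exclude that of rho, the two children of w carry disjoint colour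
   sets, and so does every node incomparable with w. Hence sending w to the larger of the least
   colours below its two children is injective on I(T) and misses both the colour of rho and the
   least remaining colour, so |I(T)| <= |F| - 2 <= k - 1. The bound for three trees is the union
   bound. *)

section \<open>Undirected paths in acyclic relations\<close>

lemma successively_iff_nth:
  "successively P xs \<longleftrightarrow> (\<forall>i. Suc i < length xs \<longrightarrow> P (xs ! i) (xs ! Suc i))"
  by (induction xs rule: induct_list012) (auto simp: nth_Cons split: nat.splits)

lemma upath_iff_successively:
  "upath E p u v \<longleftrightarrow> p \<noteq> [] \<and> hd p = u \<and> last p = v \<and> distinct p \<and>
     successively (\<lambda>a b. (a, b) \<in> E \<or> (b, a) \<in> E) p"
  unfolding upath_def successively_iff_nth ..

lemma upath_rev: "upath E p u v \<Longrightarrow> upath E (rev p) v u"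
  by (auto simp: upath_iff_successively hd_rev last_rev elim: successively_mono)

lemma upath_Cons:
  assumes "upath E p v w" "(u, v) \<in> E \<or> (v, u) \<in> E" "u \<notin> set p"
  shows "upath E (u # p) u w"
  using assms by (cases p) (auto simp: upath_iff_successively)

lemma upath_join:
  assumes "upath E p u y" "upath E q y v" "set p \<inter> set q = {y}"
  shows "upath E (p @ tl q) u v"
proof -
  obtain q' where q: "q = y # q'" using assms(2) unfolding upath_iff_successively by (cases q) auto
  then show ?thesis using assms unfolding upath_iff_successively
    by (cases q') (auto simp: successively_append_iff)
qed

lemma acyclic_upath_between:
  assumes "acyclic E" "(u, v) \<in> E\<^sup>*"
  obtains p where "upath E p u v" "set p \<subseteq> {x. (u, x) \<in> E\<^sup>* \<and> (x, v) \<in> E\<^sup>*}"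
  using assms(2)
proof (induction arbitrary: thesis rule: converse_rtrancl_induct)
  case base
  show ?case by (rule base[of "[v]"]) (auto simp: upath_def)
next
  case (step u u')
  then obtain p where p: "upath E p u' v" "set p \<subseteq> {x. (u', x) \<in> E\<^sup>* \<and> (x, v) \<in> E\<^sup>*}"
    by blast
  have "u \<notin> set p"
  proof
    assume "u \<in> set p"
    then have "(u', u) \<in> E\<^sup>*" using p(2) by blast
    then show False using step(1) assms(1) by (meson acyclic_def rtrancl_into_trancl2)
  qed
  then have "upath E (u # p) u v" using upath_Cons[OF p(1)] step(1) by blast
  moreover have "set (u # p) \<subseteq> {x. (u, x) \<in> E\<^sup>* \<and> (x, v) \<in> E\<^sup>*}"
    using p(2) step(1,2) by (auto intro: converse_rtrancl_into_rtrancl)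
  ultimately show ?case by (rule step(4))
qed

lemma acyclic_upath_via:
  assumes "acyclic E" "(u, y) \<in> E\<^sup>*" "(y, v) \<in> E\<^sup>*"
  obtains p where "upath E p u v" "y \<in> set p" "set p \<subseteq> {x. (u, x) \<in> E\<^sup>* \<and> (x, v) \<in> E\<^sup>*}"
proof -
  obtain p where p: "upath E p u y" "set p \<subseteq> {x. (u, x) \<in> E\<^sup>* \<and> (x, y) \<in> E\<^sup>*}"
    using acyclic_upath_between[OF assms(1,2)] .
  obtain q where q: "upath E q y v" "set q \<subseteq> {x. (y, x) \<in> E\<^sup>* \<and> (x, v) \<in> E\<^sup>*}"
    using acyclic_upath_between[OF assms(1,3)] .
  have "y \<in> set p" "y \<in> set q" using p(1) q(1) unfolding upath_def by (metis hd_in_set last_in_set)+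
  then have "set p \<inter> set q = {y}"
    using p(2) q(2) acyclic_impl_antisym_rtrancl[OF assms(1)] unfolding antisym_def by blast
  then have "upath E (p @ tl q) u v" by (rule upath_join[OF p(1) q(1)])
  moreover have "y \<in> set (p @ tl q)" using \<open>y \<in> set p\<close> by simp
  moreover have "set (p @ tl q) \<subseteq> {x. (u, x) \<in> E\<^sup>* \<and> (x, v) \<in> E\<^sup>*}"
  proof -
    have "set (p @ tl q) \<subseteq> set p \<union> set q" by (cases q) auto
    then show ?thesis using p(2) q(2) assms(2,3) by (blast intro: rtrancl_trans)
  qed
  ultimately show ?thesis by (rule that)
qed

section \<open>Rooted binary phylogenetic trees\<close>

locale phylo_tree =
  fixes X :: "'x set" and VT :: "'n set" and ET :: "('n \<times> 'n) set" and lT :: "'n \<Rightarrow> 'x"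
  assumes rbp_tree: "rbp_tree X (VT, ET, lT)"
begin

lemma finite_nodes: "finite VT"
  and edges_subset: "ET \<subseteq> VT \<times> VT"
  and acyclic_edges: "acyclic ET"
  and leaf_labelling: "bij_betw lT {v \<in> VT. outdeg ET v = 0} X"
  and ex1_root: "\<exists>!r. r \<in> VT \<and> indeg ET r = 0"
  and root_reaches: "r \<in> VT \<Longrightarrow> indeg ET r = 0 \<Longrightarrow> v \<in> VT \<Longrightarrow> (r, v) \<in> ET\<^sup>*"
  and non_root_degrees:
    "v \<in> VT \<Longrightarrow> indeg ET v \<noteq> 0 \<Longrightarrow> indeg ET v = 1 \<and> (outdeg ET v = 0 \<or> outdeg ET v = 2)"
  using rbp_tree unfolding rbp_tree_def by auto

definition children :: "'n \<Rightarrow> 'n set" where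
  "children v = {c. (v, c) \<in> ET}"

definition tree_root :: 'n where
  "tree_root = (THE r. r \<in> VT \<and> indeg ET r = 0)"

definition leaves_below :: "'n \<Rightarrow> 'n set" where
  "leaves_below v = {a \<in> VT. outdeg ET a = 0 \<and> (v, a) \<in> ET\<^sup>*}"

lemma edge_target_mem: "(u, v) \<in> ET \<Longrightarrow> v \<in> VT"
  using edges_subset by blast

lemma finite_edges: "finite ET"
  using finite_nodes edges_subset by (meson finite_SigmaI finite_subset)

lemma outdeg_eq_0_iff: "outdeg ET v = 0 \<longleftrightarrow> children v = {}"
proof -
  have "children v \<subseteq> snd ` ET" unfolding children_def by force
  then show ?thesis
    using finite_edges unfolding outdeg_def children_def[symmetric] by (simp add: finite_subset)
qed

lemma leaf_label_mem: "a \<in> VT \<Longrightarrow> outdeg ET a = 0 \<Longrightarrow> lT a \<in> X"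
  using leaf_labelling by (auto dest: bij_betwE)

lemma parent_unique:
  assumes "(u, v) \<in> ET" "(u', v) \<in> ET"
  shows "u = u'"
proof -
  have "{u. (u, v) \<in> ET} \<subseteq> fst ` ET" by force
  then have "finite {u. (u, v) \<in> ET}" using finite_edges finite_subset by blast
  moreover have "v \<in> VT" "indeg ET v \<noteq> 0"
    using assms edges_subset calculation unfolding indeg_def by auto
  ultimately show ?thesis
    using non_root_degrees assms unfolding indeg_def
    by (metis One_nat_def card_le_Suc0_iff_eq le_refl mem_Collect_eq)
qed

lemma tree_root: "tree_root \<in> VT" "indeg ET tree_root = 0"
  and tree_root_reaches: "v \<in> VT \<Longrightarrow> (tree_root, v) \<in> ET\<^sup>*"
  using theI'[OF ex1_root] ex1_root root_reaches unfolding tree_root_def[symmetric] by blast+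

lemma ancestors_comparable:
  assumes "(a, c) \<in> ET\<^sup>*" "(b, c) \<in> ET\<^sup>*"
  shows "(a, b) \<in> ET\<^sup>* \<or> (b, a) \<in> ET\<^sup>*"
  using assms(2,1)
proof (induction rule: rtrancl_induct)
  case base
  then show ?case by simp
next
  case (step y z)
  show ?case
  proof (cases "a = z")
    case False
    then obtain y' where "(a, y') \<in> ET\<^sup>*" "(y', z) \<in> ET"
      using step(4) by (meson rtranclE)
    then show ?thesis using parent_unique[OF step(2)] step(3) by blast
  qed (use step in \<open>meson rtrancl.rtrancl_into_rtrancl\<close>)
qed

lemma sibling_descendants_disjoint:
  assumes "(z, d1) \<in> ET" "(z, d2) \<in> ET" "d1 \<noteq> d2" "(d1, c) \<in> ET\<^sup>*"
  shows "(d2, c) \<notin> ET\<^sup>*"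
proof
  have not_below: "(a, b) \<notin> ET\<^sup>*" if "(z, a) \<in> ET" "(z, b) \<in> ET" "a \<noteq> b" for a b
  proof
    assume "(a, b) \<in> ET\<^sup>*"
    then obtain y where "(a, y) \<in> ET\<^sup>*" "(y, b) \<in> ET"
      using \<open>a \<noteq> b\<close> by (meson rtranclE)
    then have "(z, z) \<in> ET\<^sup>+"
      using parent_unique[OF that(2)] that(1) by (metis rtrancl_into_trancl2)
    then show False using acyclic_edges by (simp add: acyclic_def)
  qed
  assume "(d2, c) \<in> ET\<^sup>*"
  then show False
    using ancestors_comparable[OF assms(4)] not_below assms(1-3) by metis
qed

lemma fork_above_incomparable:
  assumes "w \<in> VT" "w' \<in> VT" "(w, w') \<notin> ET\<^sup>*" "(w', w) \<notin> ET\<^sup>*"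
  obtains z d1 d2 where "(z, d1) \<in> ET" "(z, d2) \<in> ET" "d1 \<noteq> d2"
    "(d1, w) \<in> ET\<^sup>*" "(d2, w') \<in> ET\<^sup>*"
proof -
  define A where "A = {z. (z, w) \<in> ET\<^sup>* \<and> (z, w') \<in> ET\<^sup>*}"
  have "tree_root \<in> A" unfolding A_def using tree_root_reaches assms(1,2) by blast
  moreover have "wf (ET\<inverse>)" by (rule finite_acyclic_wf_converse[OF finite_edges acyclic_edges])
  ultimately obtain z where z: "z \<in> A" "\<And>y. (z, y) \<in> ET \<Longrightarrow> y \<notin> A"
    using wfE_min by (metis converseI)
  have "(z, w) \<in> ET\<^sup>+" "(z, w') \<in> ET\<^sup>+"
    using z(1) assms(3,4) unfolding A_def by (auto simp: rtrancl_eq_or_trancl)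
  then obtain d1 d2 where d1: "(z, d1) \<in> ET" "(d1, w) \<in> ET\<^sup>*"
    and d2: "(z, d2) \<in> ET" "(d2, w') \<in> ET\<^sup>*"
    by (meson tranclD)
  have "d1 \<noteq> d2" using z(2)[OF d1(1)] d1(2) d2(2) unfolding A_def by blast
  then show ?thesis using that d1 d2 by blast
qed

lemma upath_across_fork:
  assumes "(z, d1) \<in> ET" "(z, d2) \<in> ET" "d1 \<noteq> d2"
    and "(d1, y) \<in> ET\<^sup>*" "(y, a) \<in> ET\<^sup>*" "(d2, b) \<in> ET\<^sup>*"
  obtains p where "upath ET p a b" "y \<in> set p" "z \<in> set p"
proof -
  obtain p where p: "upath ET p d1 a" "y \<in> set p"
    "set p \<subseteq> {x. (d1, x) \<in> ET\<^sup>* \<and> (x, a) \<in> ET\<^sup>*}"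
    using acyclic_upath_via[OF acyclic_edges assms(4,5)] .
  obtain q where q: "upath ET q d2 b" "set q \<subseteq> {x. (d2, x) \<in> ET\<^sup>* \<and> (x, b) \<in> ET\<^sup>*}"
    using acyclic_upath_between[OF acyclic_edges assms(6)] .
  have z_not_below: "(d, z) \<notin> ET\<^sup>*" if "(z, d) \<in> ET" for d
    using that acyclic_edges by (meson acyclic_def rtrancl_into_trancl2)
  have disjoint: "set p \<inter> set q = {}"
    using p(3) q(2) sibling_descendants_disjoint[OF assms(1-3)] by blast
  have z_notin: "z \<notin> set p" "z \<notin> set q"
    using p(3) q(2) z_not_below assms(1,2) by blast+
  have "d1 \<in> set p" using p(1) unfolding upath_def by (metis hd_in_set)
  have "upath ET (z # q) z b"
    by (rule upath_Cons[OF q(1)]) (use assms(2) z_notin in auto)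
  then have "upath ET (d1 # z # q) d1 b"
    by (rule upath_Cons) (use assms(1) disjoint \<open>d1 \<in> set p\<close> z_notin in auto)
  moreover have "set (rev p) \<inter> set (d1 # z # q) = {d1}"
    using disjoint z_notin \<open>d1 \<in> set p\<close> by auto
  ultimately have "upath ET (rev p @ tl (d1 # z # q)) a b"
    by (rule upath_join[OF upath_rev[OF p(1)]])
  then show ?thesis using that p(2) by simp
qed

lemma leaves_below_mono: "(u, v) \<in> ET\<^sup>* \<Longrightarrow> leaves_below v \<subseteq> leaves_below u"
  unfolding leaves_below_def by (auto intro: rtrancl_trans)

lemma leaves_below_fork:
  assumes "children w = {d1, d2}"
  shows "leaves_below w = leaves_below d1 \<union> leaves_below d2"
proof
  have "(w, d1) \<in> ET" "(w, d2) \<in> ET" using assms unfolding children_def by auto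
  then show "leaves_below d1 \<union> leaves_below d2 \<subseteq> leaves_below w"
    using leaves_below_mono by blast
  show "leaves_below w \<subseteq> leaves_below d1 \<union> leaves_below d2"
  proof
    fix a assume a: "a \<in> leaves_below w"
    then have "(w, a) \<in> ET\<^sup>*" "children a = {}"
      unfolding leaves_below_def outdeg_eq_0_iff by auto
    then show "a \<in> leaves_below d1 \<union> leaves_below d2"
      using a assms unfolding leaves_below_def children_def by (cases rule: converse_rtranclE) auto
  qed
qed

lemma finite_leaves_below: "finite (leaves_below v)"
  unfolding leaves_below_def using finite_nodes by simp

lemma leaves_below_nonempty:
  assumes "v \<in> VT"
  shows "leaves_below v \<noteq> {}"
proof -
  have "wf (ET\<inverse>)" by (rule finite_acyclic_wf_converse[OF finite_edges acyclic_edges])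
  then show ?thesis using assms
  proof (induction v rule: wf_induct_rule)
    case (less v)
    show ?case
    proof (cases "children v = {}")
      case True
      then show ?thesis using less.prems unfolding leaves_below_def outdeg_eq_0_iff by blast
    next
      case False
      then obtain c where "(v, c) \<in> ET" unfolding children_def by blast
      then show ?thesis
        using less.IH[of c] edges_subset leaves_below_mono[of v c] by blast
    qed
  qed
qed

end

section \<open>Colourings and the set I(T)\<close>

locale coloured_phylo_tree = phylo_tree X VT ET lT
  for X :: "'x set" and VT :: "'n set" and ET :: "('n \<times> 'n) set" and lT :: "'n \<Rightarrow> 'x" +
  fixes rho :: 'x and F :: "'x set set" and col :: "'x \<Rightarrow> 'c::linorder"
  assumes same_colour_same_block:
    "x \<in> insert rho X \<Longrightarrow> y \<in> insert rho X \<Longrightarrow> col x = col y \<Longrightarrow> \<exists>B\<in>F. x \<in> B \<and> y \<in> B"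
begin

abbreviation I :: "'n set" where
  "I \<equiv> I_set rho F (VT, ET, lT)"

definition colours :: "'n \<Rightarrow> 'c set" where
  "colours v = col ` lT ` leaves_below v"

definition min_colour :: "'n \<Rightarrow> 'c" where
  "min_colour v = Min (colours v)"

definition split_colour :: "'n \<Rightarrow> 'c" where
  "split_colour w = Max (min_colour ` children w)"

lemma I_subset: "I \<subseteq> VT"
  unfolding I_set_def by auto

lemma not_on_monochromatic_upath:
  assumes "w \<in> I" "tlabelled rho (VT, ET, lT) u x" "tlabelled rho (VT, ET, lT) v y"
    "x \<in> insert rho X" "y \<in> insert rho X" "col x = col y" "upath ET p u v"
  shows "w \<notin> set p"
proof
  assume "w \<in> set p"
  obtain B where "B \<in> F" "x \<in> B" "y \<in> B" using same_colour_same_block[OF assms(4-6)] by blast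
  then show False using assms(1-3,7) \<open>w \<in> set p\<close> unfolding I_set_def by blast
qed

lemma not_on_monochromatic_leaf_upath:
  assumes "w \<in> I" "a \<in> VT" "outdeg ET a = 0" "b \<in> VT" "outdeg ET b = 0"
    "col (lT a) = col (lT b)" "upath ET p a b"
  shows "w \<notin> set p"
  using not_on_monochromatic_upath[OF assms(1) _ _ _ _ assms(6,7)] assms(2-5) leaf_label_mem
  unfolding tlabelled_def by simp

lemma I_fork:
  assumes "w \<in> I"
  obtains d1 d2 where "d1 \<noteq> d2" "children w = {d1, d2}"
proof -
  have w: "w \<in> VT" using assms I_subset by blast
  have trivial_path: "upath ET [w] w w" unfolding upath_def by simp
  have "indeg ET w \<noteq> 0"
  proof
    assume "indeg ET w = 0"
    then have "tlabelled rho (VT, ET, lT) w rho" using w unfolding tlabelled_def by simp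
    then show False using not_on_monochromatic_upath[OF assms _ _ _ _ _ trivial_path] by auto
  qed
  moreover have "outdeg ET w \<noteq> 0"
    using not_on_monochromatic_leaf_upath[OF assms w _ w _ _ trivial_path] by auto
  ultimately have "card (children w) = 2"
    using non_root_degrees[OF w] unfolding outdeg_def children_def by auto
  then show ?thesis using that by (auto simp: card_2_iff)
qed

lemma colours_finite: "finite (colours v)"
  unfolding colours_def using finite_leaves_below by simp

lemma colours_nonempty: "v \<in> VT \<Longrightarrow> colours v \<noteq> {}"
  unfolding colours_def using leaves_below_nonempty by simp

lemma colours_subset: "colours v \<subseteq> col ` X"
  unfolding colours_def leaves_below_def using leaf_label_mem by auto

lemma colours_mono: "(u, v) \<in> ET\<^sup>* \<Longrightarrow> colours v \<subseteq> colours u"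
  unfolding colours_def using leaves_below_mono by blast

lemma min_colour_mem: "v \<in> VT \<Longrightarrow> min_colour v \<in> colours v"
  unfolding min_colour_def using colours_finite colours_nonempty by simp

lemma colours_monochromatic_leaves:
  assumes "c \<in> colours u" "c \<in> colours v"
  obtains a b where "a \<in> leaves_below u" "b \<in> leaves_below v" "col (lT a) = col (lT b)"
  using assms unfolding colours_def by auto

lemma colours_children_disjoint:
  assumes "w \<in> I" "(w, d1) \<in> ET" "(w, d2) \<in> ET" "d1 \<noteq> d2"
  shows "colours d1 \<inter> colours d2 = {}"
proof (rule ccontr)
  assume "colours d1 \<inter> colours d2 \<noteq> {}"
  then obtain a b where ab: "a \<in> leaves_below d1" "b \<in> leaves_below d2" "col (lT a) = col (lT b)"
    using colours_monochromatic_leaves by blast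
  then obtain p where "upath ET p a b" "w \<in> set p"
    using upath_across_fork[OF assms(2-4) rtrancl_refl] unfolding leaves_below_def by blast
  with ab show False
    using not_on_monochromatic_leaf_upath[OF assms(1)] unfolding leaves_below_def by blast
qed

lemma colours_incomparable_disjoint:
  assumes "w \<in> I" "w' \<in> VT" "(w, w') \<notin> ET\<^sup>*" "(w', w) \<notin> ET\<^sup>*"
  shows "colours w \<inter> colours w' = {}"
proof (rule ccontr)
  assume "colours w \<inter> colours w' \<noteq> {}"
  then obtain a b where ab: "a \<in> leaves_below w" "b \<in> leaves_below w'" "col (lT a) = col (lT b)"
    using colours_monochromatic_leaves by blast
  obtain z d1 d2 where fork: "(z, d1) \<in> ET" "(z, d2) \<in> ET" "d1 \<noteq> d2"
    "(d1, w) \<in> ET\<^sup>*" "(d2, w') \<in> ET\<^sup>*"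
    using fork_above_incomparable assms(1-4) I_subset by blast
  have "(w, a) \<in> ET\<^sup>*" "(d2, b) \<in> ET\<^sup>*"
    using ab(1,2) fork(5) unfolding leaves_below_def by (auto intro: rtrancl_trans)
  then obtain p where "upath ET p a b" "w \<in> set p"
    using upath_across_fork[OF fork(1-4)] by blast
  with ab show False
    using not_on_monochromatic_leaf_upath[OF assms(1)] unfolding leaves_below_def by blast
qed

lemma root_colour_notin_colours:
  assumes "w \<in> I"
  shows "col rho \<notin> colours w"
proof
  assume "col rho \<in> colours w"
  then obtain a where a: "a \<in> leaves_below w" "col rho = col (lT a)"
    unfolding colours_def by auto
  then have leaf: "a \<in> VT" "outdeg ET a = 0" and "(w, a) \<in> ET\<^sup>*"
    unfolding leaves_below_def by auto
  then obtain p where "upath ET p tree_root a" "w \<in> set p"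
    using acyclic_upath_via[OF acyclic_edges tree_root_reaches] assms I_subset by blast
  moreover have "tlabelled rho (VT, ET, lT) tree_root rho" "tlabelled rho (VT, ET, lT) a (lT a)"
    using tree_root leaf unfolding tlabelled_def by auto
  moreover have "lT a \<in> insert rho X" using leaf_label_mem[OF leaf] by simp
  ultimately show False
    using not_on_monochromatic_upath[OF assms _ _ _ _ a(2)] by blast
qed

lemma min_colour_fork:
  assumes "children w = {d1, d2}"
  shows "min_colour w = min (min_colour d1) (min_colour d2)"
proof -
  have "d1 \<in> VT" "d2 \<in> VT" using assms edges_subset unfolding children_def by auto
  moreover have "colours w = colours d1 \<union> colours d2"
    unfolding colours_def leaves_below_fork[OF assms] by blast
  ultimately show ?thesis
    unfolding min_colour_def by (simp add: Min_Un colours_finite colours_nonempty)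
qed

lemma split_colour_fork:
  assumes "w \<in> I" "children w = {d1, d2}" "d1 \<noteq> d2"
  shows "min_colour d1 \<noteq> min_colour d2" "split_colour w = max (min_colour d1) (min_colour d2)"
proof -
  have edges: "(w, d1) \<in> ET" "(w, d2) \<in> ET" using assms(2) unfolding children_def by auto
  have "min_colour d1 \<in> colours d1" "min_colour d2 \<in> colours d2"
    using min_colour_mem edge_target_mem edges by blast+
  then show "min_colour d1 \<noteq> min_colour d2"
    using colours_children_disjoint[OF assms(1) edges assms(3)] by (metis disjoint_iff)
  show "split_colour w = max (min_colour d1) (min_colour d2)"
    unfolding split_colour_def assms(2) by simp
qed

lemma split_colour_mem:
  assumes "w \<in> I"
  shows "split_colour w \<in> colours w" "min_colour w < split_colour w"
proof -
  obtain d1 d2 where d: "d1 \<noteq> d2" "children w = {d1, d2}" using I_fork assms by blast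
  then have edges: "(w, d1) \<in> ET" "(w, d2) \<in> ET" unfolding children_def by auto
  have "min_colour d1 \<in> colours w" "min_colour d2 \<in> colours w"
    using min_colour_mem[OF edge_target_mem] colours_mono edges by blast+
  moreover note split_colour_fork[OF assms d(2,1)] min_colour_fork[OF d(2)]
  ultimately show "split_colour w \<in> colours w" "min_colour w < split_colour w"
    by (auto simp: max_def min_def)
qed

text \<open>If w' lies below the child c of w, then every colour at w' exceeds min_colour c, while
  split_colour w is either min_colour c or a colour of the sibling of c, which does not occur at w'.\<close>
lemma split_colour_descendant:
  assumes "w \<in> I" "w' \<in> I" "(w, w') \<in> ET\<^sup>+"
  shows "split_colour w \<noteq> split_colour w'"
proof -
  obtain c where c: "(w, c) \<in> ET" "(c, w') \<in> ET\<^sup>*" using assms(3) by (meson tranclD)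
  obtain d1 d2 where d: "d1 \<noteq> d2" "children w = {d1, d2}" using I_fork assms(1) by blast
  moreover have "c \<in> children w" using c(1) unfolding children_def by simp
  ultimately obtain c' where c': "children w = {c, c'}" "c \<noteq> c'" by auto
  then have "(w, c') \<in> ET" unfolding children_def by auto
  then have disjoint: "colours c \<inter> colours c' = {}"
    and "min_colour c' \<in> colours c'"
    using colours_children_disjoint[OF assms(1) c(1) _ c'(2)] min_colour_mem[OF edge_target_mem]
    by blast+
  have below_c: "colours w' \<subseteq> colours c" using colours_mono[OF c(2)] .
  have "w' \<in> VT" using assms(2) I_subset by blast
  then have "min_colour c \<le> min_colour w'"
    unfolding min_colour_def using Min_antimono[OF below_c colours_nonempty colours_finite] by blast
  then have "min_colour c < split_colour w'" using split_colour_mem(2)[OF assms(2)] by simp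
  moreover have "split_colour w' \<in> colours c" using split_colour_mem(1)[OF assms(2)] below_c by blast
  ultimately show ?thesis
    using split_colour_fork(2)[OF assms(1) c'] disjoint \<open>min_colour c' \<in> colours c'\<close>
    by (auto simp: max_def)
qed

lemma inj_on_split_colour: "inj_on split_colour I"
proof
  fix w w' assume w: "w \<in> I" "w' \<in> I" "split_colour w = split_colour w'"
  show "w = w'"
  proof (rule ccontr)
    assume "w \<noteq> w'"
    then consider "(w, w') \<in> ET\<^sup>+" | "(w', w) \<in> ET\<^sup>+" | "(w, w') \<notin> ET\<^sup>*" "(w', w) \<notin> ET\<^sup>*"
      by (auto simp: rtrancl_eq_or_trancl)
    then show False
    proof cases
      case 1
      then show False using split_colour_descendant[OF w(1,2)] w(3) by blast
    next
      case 2
      then show False using split_colour_descendant[OF w(2,1)] w(3) by simp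
    next
      case 3
      then have "colours w \<inter> colours w' = {}"
        using colours_incomparable_disjoint w(1,2) I_subset by blast
      then show False using split_colour_mem(1) w by (metis disjoint_iff)
    qed
  qed
qed

lemma card_I_le: "card I \<le> card (col ` insert rho X) - 2"
proof (cases "I = {}")
  case False
  define D where "D = col ` X - {col rho}"
  have "finite X" using bij_betw_finite[OF leaf_labelling] finite_nodes by simp
  then have "finite D" unfolding D_def by simp
  have colours_D: "colours w \<subseteq> D" if "w \<in> I" for w
    using colours_subset root_colour_notin_colours[OF that] unfolding D_def by blast
  then have "D \<noteq> {}" using False split_colour_mem(1) by blast
  have image_subset: "split_colour ` I \<subseteq> D - {Min D}"
  proof
    fix c assume "c \<in> split_colour ` I"
    then obtain w where w: "w \<in> I" "c = split_colour w" by blast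
    have "Min D \<le> min_colour w"
      unfolding min_colour_def using Min_antimono[OF colours_D[OF w(1)] _ \<open>finite D\<close>]
        colours_nonempty w(1) I_subset by blast
    then show "c \<in> D - {Min D}" using split_colour_mem[OF w(1)] colours_D[OF w(1)] w(2) by auto
  qed
  have "card I \<le> card D - 1"
    using card_mono[OF _ image_subset] card_image[OF inj_on_split_colour] \<open>finite D\<close> \<open>D \<noteq> {}\<close>
    by simp
  moreover have "card D = card (col ` insert rho X) - 1"
    unfolding D_def using \<open>finite X\<close> by (simp add: card_Diff_singleton_if insert_absorb)
  ultimately show ?thesis by simp
qed simp

end

lemma card_I_set_le_card_cover:
  fixes X :: "'x set" and F :: "'x set set" and T :: "('n, 'x) xtree"
  assumes "rbp_tree X T" "finite F" "\<forall>x\<in>insert rho X. \<exists>B\<in>F. x \<in> B"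
  shows "card (I_set rho F T) \<le> card F - 2"
proof -
  obtain VT ET lT where T: "T = (VT, ET, lT)" by (cases T)
  have "\<forall>x\<in>insert rho X. \<exists>B. B \<in> F \<and> x \<in> B" using assms(3) by blast
  then obtain block where block: "\<forall>x\<in>insert rho X. block x \<in> F \<and> x \<in> block x"
    by (rule bchoice[THEN exE])
  obtain h :: "'x set \<Rightarrow> nat" where h: "inj_on h F"
    using finite_imp_inj_to_nat_seg[OF assms(2)] by blast
  interpret coloured_phylo_tree X VT ET lT rho F "h \<circ> block"
  proof
    show "rbp_tree X (VT, ET, lT)" using assms(1) T by simp
    fix x y assume xy: "x \<in> insert rho X" "y \<in> insert rho X" "(h \<circ> block) x = (h \<circ> block) y"
    then have "block x = block y" using block inj_onD[OF h] by (metis comp_apply)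
    then show "\<exists>B\<in>F. x \<in> B \<and> y \<in> B" using block xy(1,2) by metis
  qed
  have "(h \<circ> block) ` insert rho X \<subseteq> h ` F" using block by auto
  then have "card ((h \<circ> block) ` insert rho X) \<le> card (h ` F)"
    by (rule card_mono[OF finite_imageI[OF assms(2)]])
  also have "\<dots> \<le> card F" by (rule card_image_le[OF assms(2)])
  finally show ?thesis using card_I_le unfolding T by linarith
qed

section \<open>The deletion AAF\<close>

definition reticulations :: "'v set \<Rightarrow> ('v \<times> 'v) set \<Rightarrow> 'v set" where
  "reticulations V E = {v \<in> V. 2 \<le> indeg E v}"

lemma card_reticulations_le_hyb_number: "card (reticulations V E) \<le> hyb_number V E"
proof -
  have "card (reticulations V E) = (\<Sum>v\<in>reticulations V E. 1)" by simp
  also have "\<dots> \<le> (\<Sum>v\<in>reticulations V E. indeg E v - 1)"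
    by (rule sum_mono) (auto simp: reticulations_def)
  finally show ?thesis unfolding hyb_number_def reticulations_def .
qed

lemma aaf_conn_sym: "aaf_conn V E a b \<Longrightarrow> aaf_conn V E b a"
  unfolding aaf_conn_def by (meson sym_Un_converse sym_rtrancl symD)

lemma aaf_conn_trans: "aaf_conn V E a b \<Longrightarrow> aaf_conn V E b c \<Longrightarrow> aaf_conn V E a c"
  unfolding aaf_conn_def by (rule rtrancl_trans)

lemma aaf_conn_root_or_reticulation:
  assumes "finite E" "acyclic E" "E \<subseteq> V \<times> V" "v \<in> V"
  shows "\<exists>t \<in> insert None (Some ` reticulations V E). aaf_conn V E (Some v) t"
  using finite_acyclic_wf[OF assms(1,2)] assms(4)
proof (induction v rule: wf_induct_rule)
  case (less v)
  consider "indeg E v = 0" | "indeg E v = 1" | "2 \<le> indeg E v" by linarith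
  then show ?case
  proof cases
    case 1
    then have "(None, Some v) \<in> aaf_graph V E" using less.prems unfolding aaf_graph_def by blast
    then show ?thesis unfolding aaf_conn_def by blast
  next
    case 2
    then obtain u where "{u. (u, v) \<in> E} = {u}" unfolding indeg_def by (rule card_1_singletonE)
    then have u: "(u, v) \<in> E" by blast
    then obtain t where t: "t \<in> insert None (Some ` reticulations V E)" "aaf_conn V E (Some u) t"
      using less.IH assms(3) by blast
    have "(Some u, Some v) \<in> aaf_graph V E" using u 2 unfolding aaf_graph_def by auto
    then have "aaf_conn V E (Some v) (Some u)" unfolding aaf_conn_def by blast
    then show ?thesis using aaf_conn_trans t by blast
  next
    case 3
    then show ?thesis using less.prems unfolding aaf_conn_def reticulations_def by blast
  qed
qed

lemma label_node_mem:
  assumes "bij_betw lab {v \<in> V. outdeg E v = 0} X" "x \<in> insert rho X"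
  shows "label_node rho V E lab x \<in> insert None (Some ` V)"
proof (cases "x = rho")
  case False
  then have "x \<in> lab ` {v \<in> V. outdeg E v = 0}"
    using assms bij_betw_imp_surj_on by fastforce
  then obtain v where v: "v \<in> V" "outdeg E v = 0" "lab v = x" by blast
  have "(THE v. v \<in> V \<and> outdeg E v = 0 \<and> lab v = x) = v"
    by (rule the_equality) (use v bij_betw_imp_inj_on[OF assms(1)] in \<open>auto simp: inj_on_def\<close>)
  then show ?thesis using False v(1) unfolding label_node_def by simp
qed (simp add: label_node_def)

lemma deletion_aaf_covers: "\<forall>x\<in>insert rho X. \<exists>B\<in>deletion_aaf X rho V E lab. x \<in> B"
proof
  fix x assume x: "x \<in> insert rho X"
  let ?ln = "label_node rho V E lab"
  have "{y \<in> insert rho X. aaf_conn V E (?ln x) (?ln y)} \<in> deletion_aaf X rho V E lab"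
    unfolding deletion_aaf_def using x by auto
  moreover have "x \<in> {y \<in> insert rho X. aaf_conn V E (?ln x) (?ln y)}"
    using x unfolding aaf_conn_def by simp
  ultimately show "\<exists>B\<in>deletion_aaf X rho V E lab. x \<in> B" by (rule rev_bexI)
qed

lemma deletion_aaf_subset_components:
  assumes "finite V" "E \<subseteq> V \<times> V" "acyclic E" "bij_betw lab {v \<in> V. outdeg E v = 0} X"
  shows "deletion_aaf X rho V E lab \<subseteq>
    (\<lambda>t. {y \<in> insert rho X. aaf_conn V E t (label_node rho V E lab y)}) `
      insert None (Some ` reticulations V E)"
proof
  let ?ln = "label_node rho V E lab"
  fix B assume "B \<in> deletion_aaf X rho V E lab"
  then obtain x where x: "x \<in> insert rho X" "B = {y \<in> insert rho X. aaf_conn V E (?ln x) (?ln y)}"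
    unfolding deletion_aaf_def by auto
  obtain t where t: "t \<in> insert None (Some ` reticulations V E)" "aaf_conn V E (?ln x) t"
  proof (cases "?ln x")
    case None
    show ?thesis by (rule that[of None]) (simp_all add: None aaf_conn_def)
  next
    case (Some v)
    have "finite E" using assms(1,2) finite_subset by blast
    moreover have "v \<in> V" using label_node_mem[OF assms(4) x(1)] Some by auto
    ultimately show ?thesis
      using aaf_conn_root_or_reticulation[OF _ assms(3,2)] that Some by metis
  qed
  have "aaf_conn V E (?ln x) b \<longleftrightarrow> aaf_conn V E t b" for b
    using aaf_conn_trans[OF aaf_conn_sym[OF t(2)], of b] aaf_conn_trans[OF t(2), of b] by blast
  then have "B = {y \<in> insert rho X. aaf_conn V E t (?ln y)}" unfolding x(2) by simp
  then show "B \<in> (\<lambda>t. {y \<in> insert rho X. aaf_conn V E t (?ln y)}) `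
      insert None (Some ` reticulations V E)"
    using t(1) by blast
qed

lemma card_deletion_aaf_le:
  assumes "finite V" "E \<subseteq> V \<times> V" "acyclic E" "bij_betw lab {v \<in> V. outdeg E v = 0} X"
  shows "finite (deletion_aaf X rho V E lab)"
    and "card (deletion_aaf X rho V E lab) \<le> hyb_number V E + 1"
proof -
  define top where "top = insert None (Some ` reticulations V E)"
  have "finite (reticulations V E)" unfolding reticulations_def using assms(1) by simp
  then have "finite top" unfolding top_def by simp
  note subset = deletion_aaf_subset_components[OF assms, of rho, folded top_def]
  then show "finite (deletion_aaf X rho V E lab)"
    using \<open>finite top\<close> finite_subset by blast
  have "card (deletion_aaf X rho V E lab) \<le> card top"
    by (rule le_trans[OF card_mono[OF finite_imageI[OF \<open>finite top\<close>] subset]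
        card_image_le[OF \<open>finite top\<close>]])
  also have "\<dots> \<le> card (reticulations V E) + 1"
    unfolding top_def using \<open>finite (reticulations V E)\<close> by (simp add: card_insert_if card_image)
  also have "\<dots> \<le> hyb_number V E + 1"
    using card_reticulations_le_hyb_number by simp
  finally show "card (deletion_aaf X rho V E lab) \<le> hyb_number V E + 1" .
qed

theorem lemma4:
  fixes X :: "'x set" and rho :: 'x and TT :: "('n, 'x) xtree set"
    and V :: "'v set" and E :: "('v \<times> 'v) set" and lab :: "'v \<Rightarrow> 'x"
    and emb :: "('n, 'x) xtree \<Rightarrow> 'v set \<times> ('v \<times> 'v) set"
    and k :: nat and F :: "'x set set"
  assumes "finite X" and "rho \<notin> X"
    and "\<forall>T\<in>TT. rbp_tree X T"
    and "cnet X TT V E lab emb"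
    and "k = hyb_number V E"
    and "F = deletion_aaf X rho V E lab"
  shows "(\<forall>T\<in>TT. card (I_set rho F T) \<le> k - 1) \<and>
         (card TT = 3 \<longrightarrow> card (\<Union>T\<in>TT. I_set rho F T) \<le> 3 * (k - 1))"
proof -
  have "finite V" "E \<subseteq> V \<times> V" "acyclic E" "bij_betw lab {v \<in> V. outdeg E v = 0} X"
    using assms(4) unfolding cnet_def by auto
  note F = card_deletion_aaf_le[OF this, of rho, folded assms(5,6)]
  have I_le: "card (I_set rho F T) \<le> k - 1" if "T \<in> TT" for T
  proof -
    have "card (I_set rho F T) \<le> card F - 2"
      using card_I_set_le_card_cover[OF _ F(1)] deletion_aaf_covers[of rho X V E lab, folded assms(6)]
        assms(3) that by blast
    then show ?thesis using F(2) by linarith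
  qed
  moreover have "card (\<Union>T\<in>TT. I_set rho F T) \<le> 3 * (k - 1)" if "card TT = 3"
  proof -
    have "finite TT" using that card.infinite by fastforce
    then have "card (\<Union>T\<in>TT. I_set rho F T) \<le> (\<Sum>T\<in>TT. card (I_set rho F T))"
      by (rule card_UN_le)
    also have "\<dots> \<le> card TT * (k - 1)"
      using sum_bounded_above[of TT "\<lambda>T. card (I_set rho F T)" "k - 1"] I_le by simp
    finally show ?thesis using that by simp
  qed
  ultimately show ?thesis by blast
qed

end
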